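(* Let $A$ be a partially symmetric 0-dialgebra. Then for all $x,y\in A$, $\mathrm{sym}(x\dashv y^\ast)=\mathrm{sym}(x^\ast\dashv y)$ and $\mathrm{sym}(x\dashv y)=\mathrm{sym}(x^\ast\dashv y^\ast)$.
   Context: A 0-dialgebra with involution is a vector space with bilinear operations $\dashv,\vdash$ satisfying $a\dashv(b\dashv c)=a\dashv(b\vdash c)$ and $(a\dashv b)\vdash c=(a\vdash b)\vdash c$, together with a linear map $\ast$ with $(a^\ast)^\ast=a$, $(a\dashv b)^\ast=b^\ast\vdash a^\ast$, $(a\vdash b)^\ast=b^\ast\dashv a^\ast$. Write $\mathrm{sym}(x)=x+x^\ast$ and $\{x,y\}=x\dashv y-y\vdash x$. Such a structure is partially symmetric if $\{\mathrm{sym}(x),y\}=0$ and $\{x,\mathrm{sym}(y)\}=0$ for all $x,y$. *)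

theory Defs
  imports Main
begin

definition vec_space :: "('k::field \<Rightarrow> 'v::ab_group_add \<Rightarrow> 'v) \<Rightarrow> bool" where
  "vec_space sm \<longleftrightarrow>
     (\<forall>a x y. sm a (x + y) = sm a x + sm a y) \<and>
     (\<forall>a b x. sm (a + b) x = sm a x + sm b x) \<and>
     (\<forall>a b x. sm (a * b) x = sm a (sm b x)) \<and>
     (\<forall>x. sm 1 x = x)"

definition bilinear_op :: "('k::field \<Rightarrow> 'v::ab_group_add \<Rightarrow> 'v) \<Rightarrow> ('v \<Rightarrow> 'v \<Rightarrow> 'v) \<Rightarrow> bool" where
  "bilinear_op sm m \<longleftrightarrow>
     (\<forall>x y z. m (x + y) z = m x z + m y z) \<and>
     (\<forall>x y z. m x (y + z) = m x y + m x z) \<and>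
     (\<forall>a x y. m (sm a x) y = sm a (m x y)) \<and>
     (\<forall>a x y. m x (sm a y) = sm a (m x y))"

definition linear_map :: "('k::field \<Rightarrow> 'v::ab_group_add \<Rightarrow> 'v) \<Rightarrow> ('v \<Rightarrow> 'v) \<Rightarrow> bool" where
  "linear_map sm f \<longleftrightarrow>
     (\<forall>x y. f (x + y) = f x + f y) \<and> (\<forall>a x. f (sm a x) = sm a (f x))"

text \<open>0-dialgebra with involution: left product l (\<dashv>), right product r (\<turnstile>), involution s (\<ast>).\<close>
definition zero_dialgebra_inv ::
  "('k::field \<Rightarrow> 'v::ab_group_add \<Rightarrow> 'v) \<Rightarrow> ('v \<Rightarrow> 'v \<Rightarrow> 'v) \<Rightarrow> ('v \<Rightarrow> 'v \<Rightarrow> 'v) \<Rightarrow> ('v \<Rightarrow> 'v) \<Rightarrow> bool" where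
  "zero_dialgebra_inv sm l r s \<longleftrightarrow>
     vec_space sm \<and> bilinear_op sm l \<and> bilinear_op sm r \<and> linear_map sm s \<and>
     (\<forall>a b c. l a (l b c) = l a (r b c)) \<and>
     (\<forall>a b c. r (l a b) c = r (r a b) c) \<and>
     (\<forall>a. s (s a) = a) \<and>
     (\<forall>a b. s (l a b) = r (s b) (s a)) \<and>
     (\<forall>a b. s (r a b) = l (s b) (s a))"

definition dsym :: "('v::ab_group_add \<Rightarrow> 'v) \<Rightarrow> 'v \<Rightarrow> 'v" where
  "dsym s x = x + s x"

definition dbr :: "('v::ab_group_add \<Rightarrow> 'v \<Rightarrow> 'v) \<Rightarrow> ('v \<Rightarrow> 'v \<Rightarrow> 'v) \<Rightarrow> 'v \<Rightarrow> 'v \<Rightarrow> 'v" where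
  "dbr l r x y = l x y - r y x"

definition partially_symmetric ::
  "('k::field \<Rightarrow> 'v::ab_group_add \<Rightarrow> 'v) \<Rightarrow> ('v \<Rightarrow> 'v \<Rightarrow> 'v) \<Rightarrow> ('v \<Rightarrow> 'v \<Rightarrow> 'v) \<Rightarrow> ('v \<Rightarrow> 'v) \<Rightarrow> bool" where
  "partially_symmetric sm l r s \<longleftrightarrow>
     zero_dialgebra_inv sm l r s \<and>
     (\<forall>x y. dbr l r (dsym s x) y = 0) \<and>
     (\<forall>x y. dbr l r x (dsym s y) = 0)"

end

theory Submission
  imports Defs
begin

text \<open>Expanding the two vanishing brackets \<open>{sym x, y}\<close> and \<open>{x, sym y}\<close> and subtracting them
  cancels \<open>x \<dashv> y\<close> and \<open>y \<turnstile> x\<close>, leaving a relation between the mixed products.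
  Together with \<open>(a \<dashv> b)\<^sup>* = b\<^sup>* \<turnstile> a\<^sup>*\<close> it gives the first identity, and the second is the first
  with \<open>y\<close> replaced by \<open>y\<^sup>*\<close>.\<close>

lemma bilinear_op_add_left: "bilinear_op sm m \<Longrightarrow> m (x + y) z = m x z + m y z"
  by (simp add: bilinear_op_def)

lemma bilinear_op_add_right: "bilinear_op sm m \<Longrightarrow> m x (y + z) = m x y + m x z"
  by (simp add: bilinear_op_def)

lemma dbr_dsym_mixed_products:
  assumes l: "bilinear_op sm l" and r: "bilinear_op sm r"
    and sym_left: "\<And>x y. dbr l r (dsym s x) y = 0"
    and sym_right: "\<And>x y. dbr l r x (dsym s y) = 0"
  shows "l x (s y) + r y (s x) = l (s x) y + r (s y) x"
proof -
  have "l x y + l (s x) y = r y x + r y (s x)"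
    using sym_left[of x y]
    by (simp add: dbr_def dsym_def bilinear_op_add_left[OF l] bilinear_op_add_right[OF r])
  then have left: "l (s x) y = r y x + r y (s x) - l x y"
    by (simp add: algebra_simps)
  have "l x y + l x (s y) = r y x + r (s y) x"
    using sym_right[of x y]
    by (simp add: dbr_def dsym_def bilinear_op_add_right[OF l] bilinear_op_add_left[OF r])
  then have right: "l x (s y) = r y x + r (s y) x - l x y"
    by (simp add: algebra_simps)
  show ?thesis
    unfolding left right by (simp add: algebra_simps)
qed

theorem lemma5p2:
  fixes sm :: "'k::field \<Rightarrow> 'v::ab_group_add \<Rightarrow> 'v"
    and l r :: "'v \<Rightarrow> 'v \<Rightarrow> 'v" and s :: "'v \<Rightarrow> 'v"
  assumes "partially_symmetric sm l r s"
  shows "\<forall>x y. dsym s (l x (s y)) = dsym s (l (s x) y) \<and>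
               dsym s (l x y) = dsym s (l (s x) (s y))"
proof (intro allI)
  fix x y
  from assms have invol: "\<And>a. s (s a) = a" and anti: "\<And>a b. s (l a b) = r (s b) (s a)"
    by (auto simp: partially_symmetric_def zero_dialgebra_inv_def)
  from assms have mixed: "\<And>x y. l x (s y) + r y (s x) = l (s x) y + r (s y) x"
    by (intro dbr_dsym_mixed_products)
      (auto simp: partially_symmetric_def zero_dialgebra_inv_def)
  show "dsym s (l x (s y)) = dsym s (l (s x) y) \<and> dsym s (l x y) = dsym s (l (s x) (s y))"
    using mixed[of x y] mixed[of x "s y"] by (simp add: dsym_def anti invol)
qed

end
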